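(* For all $\mathit{in}_1, \mathit{in}_2, \mathit{in}_3 \in \mathcal{T}$, if $\mathit{in}_3 \hookrightarrow \mathit{in}_2$ and $\mathit{in}_2 \hookrightarrow \mathit{in}_1$, then $\mathit{in}_3 \hookrightarrow \mathit{in}_1$.
   Context: $\mathcal{T}$ is a finite set of inputs. Each input $\mathit{in}$ covers a nonempty finite set $\mathrm{Obj}(\mathit{in})$ of objectives and has a cost $c(\mathit{in}) > 0$. For $S \subseteq \mathcal{T}$, $\mathrm{Obj}(S) = \bigcup_{\mathit{in} \in S} \mathrm{Obj}(\mathit{in})$ and $c(S) = \sum_{\mathit{in} \in S} c(\mathit{in})$. There are no duplicates: two distinct inputs of $\mathcal{T}$ never have both the same set of covered objectives and the same cost. Local dominance of an input by a subset: for $\mathit{in} \in \mathcal{T}$ and $S \subseteq \mathcal{T}$, $\mathit{in} \sqsubseteq S$ iff $\mathit{in} \notin S$, $\mathrm{Obj}(\mathit{in}) \subseteq \mathrm{Obj}(S)$ and $c(\mathit{in}) \ge c(S)$. Local dominance between inputs: $\mathit{in}_1 \hookrightarrow \mathit{in}_2$ iff there exists $S \subseteq \mathcal{T}$ with $\mathit{in}_1 \in S$ and $\mathit{in}_2 \sqsubseteq S$. *)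

theory Defs
  imports Complex_Main
begin

definition ObjS :: "('i \<Rightarrow> 'o set) \<Rightarrow> 'i set \<Rightarrow> 'o set" where
  "ObjS Obj S = (\<Union>x\<in>S. Obj x)"

definition costS :: "('i \<Rightarrow> real) \<Rightarrow> 'i set \<Rightarrow> real" where
  "costS c S = (\<Sum>x\<in>S. c x)"

definition well_formed_inputs :: "'i set \<Rightarrow> ('i \<Rightarrow> 'o set) \<Rightarrow> ('i \<Rightarrow> real) \<Rightarrow> bool" where
  "well_formed_inputs T Obj c \<longleftrightarrow>
     finite T \<and>
     (\<forall>x\<in>T. Obj x \<noteq> {} \<and> finite (Obj x) \<and> c x > 0) \<and>
     (\<forall>x\<in>T. \<forall>y\<in>T. x \<noteq> y \<longrightarrow> \<not> (Obj x = Obj y \<and> c x = c y))"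

definition ldom_set :: "('i \<Rightarrow> 'o set) \<Rightarrow> ('i \<Rightarrow> real) \<Rightarrow> 'i \<Rightarrow> 'i set \<Rightarrow> bool" where
  "ldom_set Obj c i S \<longleftrightarrow> i \<notin> S \<and> Obj i \<subseteq> ObjS Obj S \<and> c i \<ge> costS c S"

definition ldom :: "'i set \<Rightarrow> ('i \<Rightarrow> 'o set) \<Rightarrow> ('i \<Rightarrow> real) \<Rightarrow> 'i \<Rightarrow> 'i \<Rightarrow> bool" where
  "ldom T Obj c i1 i2 \<longleftrightarrow> (\<exists>S. S \<subseteq> T \<and> i1 \<in> S \<and> ldom_set Obj c i2 S)"

end

theory Submission
  imports Defs
begin

(* If S1 witnesses in3 \<hookrightarrow> in2 and S2 witnesses in2 \<hookrightarrow> in1, then replacing in2 by S1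
   inside S2 gives the witness (S2 - {in2}) \<union> S1 for in3 \<hookrightarrow> in1: it covers Obj in1 and
   costs at most c(S2) - c(in2) + c(S1) \<le> c(in1). The only thing to rule out is in1 \<in> S1.
   Then positivity of costs gives c(in1) \<le> c(S1) \<le> c(in2) \<le> c(S2) \<le> c(in1), so S1 = {in1} and
   S2 = {in2}; hence in1 and in2 have the same objectives and the same cost, so they coincide
   by the absence of duplicates, contradicting in2 \<notin> S1. *)

lemma ObjS_singleton [simp]: "ObjS Obj {x} = Obj x"
  by (simp add: ObjS_def)

lemma ObjS_Un: "ObjS Obj (A \<union> B) = ObjS Obj A \<union> ObjS Obj B"
  by (simp add: ObjS_def)

lemma costS_Un_le:
  assumes "finite A" "finite B" "\<And>x. x \<in> B \<Longrightarrow> 0 \<le> c x"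
  shows "costS c (A \<union> B) \<le> costS c A + costS c B"
proof -
  have "0 \<le> sum c (A \<inter> B)"
    using assms(3) by (intro sum_nonneg) blast
  then show ?thesis
    using sum_Un[OF assms(1,2), of c] by (simp add: costS_def)
qed

lemma costS_remove:
  assumes "finite S" "x \<in> S"
  shows "costS c (S - {x}) = costS c S - c x"
  using assms by (simp add: costS_def sum_diff1)

lemma cost_le_costS:
  assumes "finite S" "x \<in> S" "\<And>y. y \<in> S \<Longrightarrow> 0 \<le> c y"
  shows "c x \<le> costS c S"
  unfolding costS_def using assms by (intro member_le_sum) auto

lemma costS_le_cost_imp_singleton:
  assumes "finite S" "x \<in> S" "\<And>y. y \<in> S \<Longrightarrow> 0 < c y"
    and "costS c S \<le> c x"
  shows "S = {x}"
proof (rule ccontr)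
  assume "S \<noteq> {x}"
  then obtain y where y: "y \<in> S" "y \<noteq> x"
    using assms(2) by blast
  have "c x + c y = costS c {x, y}"
    using y(2) by (simp add: costS_def)
  also have "\<dots> \<le> costS c S"
    unfolding costS_def
    using assms(1-3) y(1) by (intro sum_mono2) (auto intro: less_imp_le)
  finally have "c x + c y \<le> c x"
    using assms(4) by linarith
  with assms(3) y(1) show False
    by (simp add: not_le[symmetric])
qed

lemma ldom_set_replace:
  assumes "ldom_set Obj c i1 S2" "i2 \<in> S2" "ldom_set Obj c i2 S1" "i1 \<notin> S1"
    and "finite S1" "finite S2" "\<And>x. x \<in> S1 \<Longrightarrow> 0 \<le> c x"
  shows "ldom_set Obj c i1 ((S2 - {i2}) \<union> S1)"
proof -
  have "Obj i1 \<subseteq> ObjS Obj ((S2 - {i2}) \<union> S1)"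
  proof -
    have "ObjS Obj S2 \<subseteq> ObjS Obj (S2 - {i2}) \<union> Obj i2"
      by (auto simp: ObjS_def)
    then show ?thesis
      using assms(1,3) by (auto simp: ldom_set_def ObjS_Un)
  qed
  moreover have "costS c ((S2 - {i2}) \<union> S1) \<le> c i1"
  proof -
    have "costS c ((S2 - {i2}) \<union> S1) \<le> costS c (S2 - {i2}) + costS c S1"
      using assms(5-7) by (intro costS_Un_le) auto
    also have "\<dots> = costS c S2 - c i2 + costS c S1"
      using assms(2,6) by (simp add: costS_remove)
    finally show ?thesis
      using assms(1,3) by (simp add: ldom_set_def)
  qed
  ultimately show ?thesis
    using assms(1,4) by (auto simp: ldom_set_def)
qed

lemma ldom_witness_excludes_dominated:
  assumes wf: "well_formed_inputs T Obj c" and "in1 \<in> T" "in2 \<in> T"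
    and S1: "S1 \<subseteq> T" "ldom_set Obj c in2 S1"
    and S2: "S2 \<subseteq> T" "in2 \<in> S2" "ldom_set Obj c in1 S2"
  shows "in1 \<notin> S1"
proof
  assume in1: "in1 \<in> S1"
  have "finite T" and pos: "\<And>x. x \<in> T \<Longrightarrow> 0 < c x"
    and distinct: "\<And>x y. x \<in> T \<Longrightarrow> y \<in> T \<Longrightarrow> Obj x = Obj y \<Longrightarrow> c x = c y \<Longrightarrow> x = y"
    using wf unfolding well_formed_inputs_def by blast+
  then have fin: "finite S1" "finite S2"
    using S1(1) S2(1) by (simp_all add: finite_subset)
  have le1: "c in1 \<le> costS c S1"
    using fin(1) in1 S1(1) pos by (intro cost_le_costS) (auto intro: less_imp_le)
  have le2: "c in2 \<le> costS c S2"
    using fin(2) S2 pos by (intro cost_le_costS) (auto intro: less_imp_le)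
  have "costS c S1 \<le> c in2" "costS c S2 \<le> c in1"
    using S1(2) S2(3) by (simp_all add: ldom_set_def)
  with le1 le2 have costs: "c in1 = c in2" "costS c S1 \<le> c in1" "costS c S2 \<le> c in2"
    by linarith+
  have "S1 = {in1}"
    using fin(1) in1 S1(1) pos costs(2) by (intro costS_le_cost_imp_singleton) auto
  moreover have "S2 = {in2}"
    using fin(2) S2(1,2) pos costs(3) by (intro costS_le_cost_imp_singleton) auto
  ultimately have "Obj in1 = Obj in2"
    using S1(2) S2(3) by (auto simp: ldom_set_def)
  with costs(1) have "in1 = in2"
    using distinct assms(2,3) by blast
  with in1 S1(2) show False
    by (simp add: ldom_set_def)
qed

theorem mainTheorem8:
  fixes T :: "'i set" and Obj :: "'i \<Rightarrow> 'o set" and c :: "'i \<Rightarrow> real"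
  assumes "well_formed_inputs T Obj c"
    and "in1 \<in> T" and "in2 \<in> T" and "in3 \<in> T"
    and "ldom T Obj c in3 in2" and "ldom T Obj c in2 in1"
  shows "ldom T Obj c in3 in1"
proof -
  obtain S1 where S1: "S1 \<subseteq> T" "in3 \<in> S1" "ldom_set Obj c in2 S1"
    using assms(5) unfolding ldom_def by blast
  obtain S2 where S2: "S2 \<subseteq> T" "in2 \<in> S2" "ldom_set Obj c in1 S2"
    using assms(6) unfolding ldom_def by blast
  have "finite T" and pos: "\<And>x. x \<in> T \<Longrightarrow> 0 < c x"
    using assms(1) unfolding well_formed_inputs_def by blast+
  have "ldom_set Obj c in1 ((S2 - {in2}) \<union> S1)"
  proof (rule ldom_set_replace[OF S2(3,2) S1(3)])
    show "in1 \<notin> S1"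
      using ldom_witness_excludes_dominated[OF assms(1-3) S1(1,3) S2] .
    show "finite S1" "finite S2"
      using \<open>finite T\<close> S1(1) S2(1) by (simp_all add: finite_subset)
    show "\<And>x. x \<in> S1 \<Longrightarrow> 0 \<le> c x"
      using pos S1(1) by (simp add: less_imp_le subset_iff)
  qed
  moreover have "(S2 - {in2}) \<union> S1 \<subseteq> T" "in3 \<in> (S2 - {in2}) \<union> S1"
    using S1(1,2) S2(1) by auto
  ultimately show ?thesis
    unfolding ldom_def by blast
qed

end
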